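(* Let $1\leq n<\omega$ and let $\kappa$ be a cardinal with $\Theta_n>\kappa$. Then $\Theta_{n+1}>\kappa^+$.
   Context: For $1\leq n<\omega$, $\Theta_n$ is the least cardinal $\theta$ such that for every function $f:\theta^n\to\omega$ there is a sequence $\langle A_i\mid i<n\rangle$ of infinite subsets of $\theta$ such that $f\restriction\prod_{i<n}A_i$ is constant. (Here $\theta^n$ is the set of all $n$-tuples from $\theta$.) *)

theory Defs
  imports Main
begin

text \<open>The partition property whose least witness is Theta_n: a set A (of size theta)
  has it iff for every f : A^n \<rightarrow> omega there are infinite subsets A_0..A_{n-1} of A
  with f constant on their product.  n-tuples are lists of length n.\<close>

definition theta_prop :: "nat \<Rightarrow> 'a set \<Rightarrow> bool" where
  "theta_prop n A \<longleftrightarrow>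
     (\<forall>f :: 'a list \<Rightarrow> nat.
        \<exists>As :: nat \<Rightarrow> 'a set.
          (\<forall>i<n. As i \<subseteq> A \<and> infinite (As i)) \<and>
          (\<exists>c. \<forall>xs. length xs = n \<and> (\<forall>i<n. xs ! i \<in> As i) \<longrightarrow> f xs = c))"

text \<open>"Theta_n > kappa" (kappa = |K|): no cardinal theta \<le> kappa has the property,
  i.e. the least cardinal with the property (if any) exceeds kappa.\<close>

definition Theta_gt :: "nat \<Rightarrow> 'a set \<Rightarrow> bool" where
  "Theta_gt n K \<longleftrightarrow> (\<forall>X :: 'a set. (card_of X, card_of K) \<in> ordLeq \<longrightarrow> \<not> theta_prop n X)"

text \<open>"Theta_n > kappa^+", with the sets of size \<le> kappa^+ taken in an arbitrary type 'b.\<close>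

definition Theta_gt_suc :: "nat \<Rightarrow> 'a set \<Rightarrow> 'b itself \<Rightarrow> bool" where
  "Theta_gt_suc n K _ \<longleftrightarrow>
     (\<forall>Y :: 'b set. (card_of Y, cardSuc (card_of K)) \<in> ordLeq \<longrightarrow> \<not> theta_prop n Y)"

end

(*
  Well-order a set Y with |Y| <= kappa^+ by its cardinal order. Every proper initial segment
  below b has size <= kappa < Theta_n, so it carries a colouring F_b of n-tuples with no infinite
  homogeneous product. Colour an (n+1)-tuple by the position j of its largest entry b together
  with the F_b-colour of the other n entries. On a homogeneous product A_0 x ... x A_n the
  position j is constant; choosing b0 < b in A_j, every tuple with b0 in place j still has its
  maximum there, so all other factors lie below b0 < b, and F_b is constant on their product:
  a contradiction.
*)

theory Submission
  imports Defs "HOL-Library.Nat_Bijection"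
begin

unbundle cardinal_syntax

definition tuples :: "nat \<Rightarrow> (nat \<Rightarrow> 'a set) \<Rightarrow> 'a list set" where
  "tuples n As = {xs. length xs = n \<and> (\<forall>i<n. xs ! i \<in> As i)}"

lemma theta_prop_iff_tuples:
  "theta_prop n A \<longleftrightarrow>
     (\<forall>f :: 'a list \<Rightarrow> nat. \<exists>As. (\<forall>i<n. As i \<subseteq> A \<and> infinite (As i)) \<and>
        (\<exists>c. \<forall>xs\<in>tuples n As. f xs = c))"
  unfolding theta_prop_def tuples_def by simp

lemma map_upt_in_tuples: "(\<And>k. k < n \<Longrightarrow> p k \<in> As k) \<Longrightarrow> map p [0..<n] \<in> tuples n As"
  by (simp add: tuples_def)

lemma tuples_nonempty:
  assumes "\<And>k. k < n \<Longrightarrow> As k \<noteq> {}"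
  shows "\<exists>xs. xs \<in> tuples n As"
proof
  show "map (\<lambda>k. SOME x. x \<in> As k) [0..<n] \<in> tuples n As"
    using assms by (intro map_upt_in_tuples) (simp add: some_in_eq)
qed

lemma theta_prop_card_mono:
  assumes "theta_prop n A" and "|A| \<le>o |B|"
  shows "theta_prop n B"
  unfolding theta_prop_iff_tuples
proof
  fix f :: "'b list \<Rightarrow> nat"
  obtain h where h: "inj_on h A" "h ` A \<subseteq> B"
    using assms(2) card_of_ordLeq[of A B] by blast
  obtain As c where As: "\<forall>i<n. As i \<subseteq> A \<and> infinite (As i)"
    and hom: "\<forall>xs\<in>tuples n As. f (map h xs) = c"
    using assms(1)[unfolded theta_prop_iff_tuples, rule_format, of "\<lambda>xs. f (map h xs)"] by blast
  show "\<exists>Bs. (\<forall>i<n. Bs i \<subseteq> B \<and> infinite (Bs i)) \<and>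
          (\<exists>c. \<forall>ys\<in>tuples n Bs. f ys = c)"
  proof (intro exI conjI ballI allI impI)
    fix i assume "i < n"
    then have "As i \<subseteq> A" "infinite (As i)" using As by auto
    moreover from this have "inj_on h (As i)" using h(1) inj_on_subset by blast
    ultimately show "h ` As i \<subseteq> B" "infinite (h ` As i)"
      using h(2) by (auto simp: finite_image_iff)
  next
    fix ys assume ys: "ys \<in> tuples n (\<lambda>i. h ` As i)"
    have entry: "inv_into A h (ys ! i) \<in> As i \<and> h (inv_into A h (ys ! i)) = ys ! i"
      if i: "i < n" for i
    proof -
      obtain a where "a \<in> As i" "ys ! i = h a" using ys i by (auto simp: tuples_def)
      moreover have "a \<in> A" using As i \<open>a \<in> As i\<close> by blast
      ultimately show ?thesis using h(1) by simp
    qed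
    let ?xs = "map (inv_into A h) ys"
    have "?xs \<in> tuples n As" and "map h ?xs = ys"
      using ys entry by (auto simp: tuples_def intro!: nth_equalityI)
    then show "f ys = c" using hom by metis
  qed
qed

lemma Theta_gt_iff_not_theta_prop: "Theta_gt n K \<longleftrightarrow> \<not> theta_prop n K"
  unfolding Theta_gt_def
  by (meson theta_prop_card_mono ordLeq_refl card_of_Card_order)

lemma Linear_order_finite_has_greatest:
  assumes lin: "Linear_order r" and "finite S" "S \<noteq> {}" "S \<subseteq> Field r"
  shows "\<exists>m\<in>S. \<forall>x\<in>S. (x, m) \<in> r"
  using assms(2-4)
proof (induction S rule: finite_ne_induct)
  case (singleton x)
  then show ?case using lin by (auto simp: order_on_defs refl_on_def)
next
  case (insert a S)
  then obtain m where m: "m \<in> S" "\<forall>x\<in>S. (x, m) \<in> r" by auto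
  have "a \<noteq> m" "a \<in> Field r" "m \<in> Field r" using insert m by auto
  then consider "(a, m) \<in> r" | "(m, a) \<in> r"
    using lin by (auto simp: order_on_defs total_on_def)
  then show ?case
  proof cases
    case 1
    then show ?thesis using m by blast
  next
    case 2
    then have "\<forall>x\<in>S. (x, a) \<in> r" using m lin by (meson order_on_defs trans_def)
    moreover have "(a, a) \<in> r" using \<open>a \<in> Field r\<close> lin by (auto simp: order_on_defs refl_on_def)
    ultimately show ?thesis by blast
  qed
qed

definition max_index :: "'a rel \<Rightarrow> 'a list \<Rightarrow> nat" where
  "max_index r xs = (LEAST j. j < length xs \<and> (\<forall>i<length xs. (xs ! i, xs ! j) \<in> r))"

lemma max_index_greatest:
  assumes "Linear_order r" "set xs \<subseteq> Field r" "xs \<noteq> []"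
  shows "max_index r xs < length xs" and "i < length xs \<Longrightarrow> (xs ! i, xs ! max_index r xs) \<in> r"
proof -
  obtain m where "m \<in> set xs" "\<forall>x\<in>set xs. (x, m) \<in> r"
    using Linear_order_finite_has_greatest[of r "set xs"] assms by auto
  then obtain j where "j < length xs" "\<forall>i<length xs. (xs ! i, xs ! j) \<in> r"
    by (metis in_set_conv_nth nth_mem)
  then have "max_index r xs < length xs \<and> (\<forall>i<length xs. (xs ! i, xs ! max_index r xs) \<in> r)"
    unfolding max_index_def by (rule LeastI[of _ j, OF conjI])
  then show "max_index r xs < length xs" and "i < length xs \<Longrightarrow> (xs ! i, xs ! max_index r xs) \<in> r"
    by auto
qed

definition insert_nth :: "nat \<Rightarrow> 'a \<Rightarrow> 'a list \<Rightarrow> 'a list" where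
  "insert_nth j x xs = take j xs @ x # drop j xs"

definition remove_nth :: "nat \<Rightarrow> 'a list \<Rightarrow> 'a list" where
  "remove_nth j xs = take j xs @ drop (Suc j) xs"

lemma length_insert_nth: "j \<le> length xs \<Longrightarrow> length (insert_nth j x xs) = Suc (length xs)"
  by (simp add: insert_nth_def)

lemma nth_insert_nth:
  "j \<le> length xs \<Longrightarrow>
   insert_nth j x xs ! k = (if k < j then xs ! k else if k = j then x else xs ! (k - 1))"
  by (auto simp: insert_nth_def nth_append min_def nth_Cons' not_less)

lemma remove_nth_insert_nth: "j \<le> length xs \<Longrightarrow> remove_nth j (insert_nth j x xs) = xs"
  by (simp add: insert_nth_def remove_nth_def)

lemma set_tuple_subset:
  "xs \<in> tuples n As \<Longrightarrow> (\<And>i. i < n \<Longrightarrow> As i \<subseteq> S) \<Longrightarrow> set xs \<subseteq> S"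
  by (force simp: tuples_def in_set_conv_nth)

definition skip_index :: "nat \<Rightarrow> nat \<Rightarrow> nat" where
  "skip_index j k = (if k < j then k else Suc k)"

lemma insert_nth_in_tuples:
  assumes j: "j \<le> n" and x: "x \<in> As j" and xs: "xs \<in> tuples n (As \<circ> skip_index j)"
  shows "insert_nth j x xs \<in> tuples (Suc n) As"
proof -
  have len: "length xs = n" and xs_nth: "\<And>i. i < n \<Longrightarrow> xs ! i \<in> As (skip_index j i)"
    using xs by (auto simp: tuples_def)
  have "insert_nth j x xs ! k \<in> As k" if k: "k < Suc n" for k
  proof (cases k j rule: linorder_cases)
    case less
    then have "k < n" "skip_index j k = k" using j by (auto simp: skip_index_def)
    then show ?thesis using xs_nth[of k] less j len by (simp add: nth_insert_nth)
  next
    case equal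
    then show ?thesis using x j len by (simp add: nth_insert_nth)
  next
    case greater
    then have "k - 1 < n" "skip_index j (k - 1) = k" using k by (auto simp: skip_index_def)
    then show ?thesis using xs_nth[of "k - 1"] greater j len by (simp add: nth_insert_nth)
  qed
  then show ?thesis using j len by (simp add: tuples_def length_insert_nth)
qed

lemma constant_max_index_imp_underS:
  assumes lin: "Linear_order r"
    and As: "\<And>i. i < m \<Longrightarrow> As i \<subseteq> Field r \<and> infinite (As i)"
    and j: "j < m"
    and const: "\<And>xs. xs \<in> tuples m As \<Longrightarrow> max_index r xs = j"
  obtains b where "b \<in> As j" and "\<And>i. i < m \<Longrightarrow> i \<noteq> j \<Longrightarrow> As i \<subseteq> underS r b"
proof -
  obtain b0 b where b: "b0 \<in> As j" "b \<in> As j" "b0 \<noteq> b" "(b0, b) \<in> r"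
  proof -
    obtain x where x: "x \<in> As j" using As[OF j] infinite_imp_nonempty by blast
    obtain y where y: "y \<in> As j" "y \<noteq> x"
      using As[OF j] infinite_imp_nonempty[of "As j - {x}"] by auto
    have "(x, y) \<in> r \<or> (y, x) \<in> r"
      using x y As[OF j] lin by (auto simp: order_on_defs total_on_def)
    then show thesis using that x y by blast
  qed
  define p where "p k = (SOME x. x \<in> As k)" for k
  have p: "p k \<in> As k" if "k < m" for k
    using As[OF that] unfolding p_def by (metis some_in_eq infinite_imp_nonempty)
  have "As i \<subseteq> underS r b" if i: "i < m" "i \<noteq> j" for i
  proof
    fix a assume a: "a \<in> As i"
    let ?xs = "map ((p(i := a))(j := b0)) [0..<m]"
    have xs: "?xs \<in> tuples m As" using p a b i j by (intro map_upt_in_tuples) auto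
    have "set ?xs \<subseteq> Field r" by (rule set_tuple_subset[OF xs]) (simp add: As)
    moreover have "?xs \<noteq> []" using j by simp
    ultimately have "(?xs ! i, ?xs ! max_index r ?xs) \<in> r"
      by (rule max_index_greatest(2)[OF lin]) (simp add: i)
    then have "(a, b0) \<in> r" using const[OF xs] i j by simp
    moreover have "trans r" "antisym r" using lin by (auto simp: order_on_defs)
    ultimately show "a \<in> underS r b" using b unfolding underS_def trans_def antisym_def by blast
  qed
  then show thesis using that b(2) by blast
qed

definition top_coloring :: "'a rel \<Rightarrow> ('a \<Rightarrow> 'a list \<Rightarrow> nat) \<Rightarrow> 'a list \<Rightarrow> nat" where
  "top_coloring r F xs =
     (let j = max_index r xs in prod_encode (j, F (xs ! j) (remove_nth j xs)))"

lemma homogeneous_top_coloring_imp_homogeneous_segment: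
  assumes lin: "Linear_order r"
    and As: "\<And>i. i < Suc n \<Longrightarrow> As i \<subseteq> Field r \<and> infinite (As i)"
    and hom: "\<And>xs. xs \<in> tuples (Suc n) As \<Longrightarrow> top_coloring r F xs = c"
  shows "\<exists>b\<in>Field r. \<exists>Bs. (\<forall>k<n. Bs k \<subseteq> underS r b \<and> infinite (Bs k)) \<and>
           (\<exists>d. \<forall>ys\<in>tuples n Bs. F b ys = d)"
proof -
  obtain j d where jd: "prod_decode c = (j, d)" by fastforce
  have hom': "max_index r xs = j \<and> F (xs ! j) (remove_nth j xs) = d"
    if "xs \<in> tuples (Suc n) As" for xs
    using hom[OF that] jd by (metis prod.inject prod_encode_inverse top_coloring_def)
  have j: "j < Suc n"
  proof -
    obtain xs where xs: "xs \<in> tuples (Suc n) As"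
      using tuples_nonempty As infinite_imp_nonempty by metis
    have "set xs \<subseteq> Field r" by (rule set_tuple_subset[OF xs]) (simp add: As)
    then have "max_index r xs < length xs" using xs lin max_index_greatest(1) by (force simp: tuples_def)
    then show ?thesis using hom'[OF xs] xs by (simp add: tuples_def)
  qed
  obtain b where b: "b \<in> As j"
    and below: "\<And>i. i < Suc n \<Longrightarrow> i \<noteq> j \<Longrightarrow> As i \<subseteq> underS r b"
    using constant_max_index_imp_underS[OF lin _ j] As hom' by blast
  define Bs where "Bs = As \<circ> skip_index j"
  have "(\<forall>k<n. Bs k \<subseteq> underS r b \<and> infinite (Bs k)) \<and>
        (\<exists>d. \<forall>ys\<in>tuples n Bs. F b ys = d)"
  proof (intro conjI allI impI exI ballI)
    fix k assume "k < n"
    then have "skip_index j k < Suc n" "skip_index j k \<noteq> j" by (auto simp: skip_index_def)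
    then show "Bs k \<subseteq> underS r b" "infinite (Bs k)" using below As by (simp_all add: Bs_def)
  next
    fix ys assume ys: "ys \<in> tuples n Bs"
    have "j \<le> length ys" using j ys by (simp add: tuples_def)
    moreover have "insert_nth j b ys \<in> tuples (Suc n) As"
      using j b ys unfolding Bs_def by (intro insert_nth_in_tuples) auto
    ultimately show "F b ys = d"
      using hom' by (force simp: nth_insert_nth remove_nth_insert_nth)
  qed
  moreover have "b \<in> Field r" using b As[OF j] by blast
  ultimately show ?thesis by blast
qed

lemma not_theta_prop_Suc_if_initial_segments:
  assumes lin: "Linear_order r"
    and segments: "\<And>b. b \<in> Field r \<Longrightarrow> \<not> theta_prop n (underS r b)"
  shows "\<not> theta_prop (Suc n) (Field r)"
proof
  have "\<forall>b\<in>Field r. \<exists>Fb :: 'a list \<Rightarrow> nat. \<not> (\<exists>Bs.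
          (\<forall>k<n. Bs k \<subseteq> underS r b \<and> infinite (Bs k)) \<and> (\<exists>d. \<forall>ys\<in>tuples n Bs. Fb ys = d))"
    using segments unfolding theta_prop_iff_tuples not_all by blast
  then obtain F :: "'a \<Rightarrow> 'a list \<Rightarrow> nat" where F: "\<forall>b\<in>Field r. \<not> (\<exists>Bs.
      (\<forall>k<n. Bs k \<subseteq> underS r b \<and> infinite (Bs k)) \<and> (\<exists>d. \<forall>ys\<in>tuples n Bs. F b ys = d))"
    by (elim bchoice[THEN exE]) blast
  assume "theta_prop (Suc n) (Field r)"
  from this[unfolded theta_prop_iff_tuples, rule_format, of "top_coloring r F"]
  obtain As c where "\<forall>i<Suc n. As i \<subseteq> Field r \<and> infinite (As i)"
    and "\<forall>xs\<in>tuples (Suc n) As. top_coloring r F xs = c"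
    by blast
  then have "\<exists>b\<in>Field r. \<exists>Bs. (\<forall>k<n. Bs k \<subseteq> underS r b \<and> infinite (Bs k)) \<and>
               (\<exists>d. \<forall>ys\<in>tuples n Bs. F b ys = d)"
    by (intro homogeneous_top_coloring_imp_homogeneous_segment[OF lin, where As = As and c = c]) auto
  with F show False by blast
qed

lemma card_of_underS_ordLeq_if_ordLeq_cardSuc:
  assumes "Card_order r" and "r \<le>o cardSuc |K|" and "b \<in> Field r"
  shows "|underS r b| \<le>o |K|"
proof -
  have "|underS r b| <o cardSuc |K|"
    using card_of_underS[OF assms(1,3)] assms(2) by (rule ordLess_ordLeq_trans)
  then show ?thesis using cardSuc_ordLeq_ordLess[OF card_of_Card_order card_of_Card_order] by blast
qed

theorem proposition5p2:
  fixes n :: nat and K :: "'a set"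
  assumes "1 \<le> n"
    and "Theta_gt n K"
  shows "Theta_gt_suc (Suc n) K TYPE('b)"
  unfolding Theta_gt_suc_def
proof (intro allI impI)
  have K: "\<not> theta_prop n K" using assms(2) by (simp add: Theta_gt_iff_not_theta_prop)
  fix Y :: "'b set" assume Y: "|Y| \<le>o cardSuc |K|"
  let ?r = "card_of Y"
  have "Linear_order ?r" using card_of_Well_order[of Y] by (simp add: well_order_on_def)
  moreover have "\<not> theta_prop n (underS ?r b)" if "b \<in> Field ?r" for b
    using card_of_underS_ordLeq_if_ordLeq_cardSuc[OF card_of_Card_order Y that]
      theta_prop_card_mono K by blast
  ultimately have "\<not> theta_prop (Suc n) (Field ?r)" by (rule not_theta_prop_Suc_if_initial_segments)
  then show "\<not> theta_prop (Suc n) Y" by (simp add: Field_card_of)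
qed

end
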